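(* Let $\mathcal X$ be a real normed space equipped with isosceles orthogonality $\perp$, and let $\mathcal Y$ be a Banach space. Let $f,g,h,k:\mathcal X\to\mathcal Y$ satisfy $f(0)=g(0)=h(0)=k(0)=0$ and, for some $\varepsilon>0$, \[\|f(x+y)+g(x-y)-h(x)-k(y)\|\le\varepsilon\quad\text{for all }x,y\in\mathcal X\text{ with }x\perp y.\] Then $f$ is a linear combination (with real coefficients) of an approximately orthogonally Cauchy mapping, an approximately orthogonally quadratic mapping and an approximately orthogonally constant mapping, all from $\mathcal X$ to $\mathcal Y$. The same is true for $g$.
   Context: For $x,y$ in a real normed space $\mathcal X$, isosceles orthogonality is defined by $x\perp y$ if and only if $\|x+y\|=\|x-y\|$. A mapping $\varphi:\mathcal X\to\mathcal Y$ is: approximately orthogonally Cauchy if there is $\delta>0$ with $\|\varphi(x+y)-\varphi(x)-\varphi(y)\|\le\delta$ for all $x\perp y$; approximately orthogonally quadratic if there is $\delta>0$ with $\|\varphi(x+y)+\varphi(x-y)-2\varphi(x)-2\varphi(y)\|\le\delta$ for all $x\perp y$; approximately orthogonally constant if there is $\delta>0$ with $\|\varphi(x+y)-\varphi(x-y)\|\le\delta$ for all $x\perp y$. *)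

theory Defs
  imports "HOL-Analysis.Analysis"
begin

definition iso_orth :: "'a::real_normed_vector \<Rightarrow> 'a \<Rightarrow> bool" where
  "iso_orth x y \<longleftrightarrow> norm (x + y) = norm (x - y)"

definition approx_orth_cauchy :: "('a::real_normed_vector \<Rightarrow> 'b::real_normed_vector) \<Rightarrow> bool" where
  "approx_orth_cauchy \<phi> \<longleftrightarrow> (\<exists>\<delta>>0. \<forall>x y. iso_orth x y \<longrightarrow>
      norm (\<phi> (x + y) - \<phi> x - \<phi> y) \<le> \<delta>)"

definition approx_orth_quadratic :: "('a::real_normed_vector \<Rightarrow> 'b::real_normed_vector) \<Rightarrow> bool" where
  "approx_orth_quadratic \<phi> \<longleftrightarrow> (\<exists>\<delta>>0. \<forall>x y. iso_orth x y \<longrightarrow>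
      norm (\<phi> (x + y) + \<phi> (x - y) - 2 *\<^sub>R \<phi> x - 2 *\<^sub>R \<phi> y) \<le> \<delta>)"

definition approx_orth_constant :: "('a::real_normed_vector \<Rightarrow> 'b::real_normed_vector) \<Rightarrow> bool" where
  "approx_orth_constant \<phi> \<longleftrightarrow> (\<exists>\<delta>>0. \<forall>x y. iso_orth x y \<longrightarrow>
      norm (\<phi> (x + y) - \<phi> (x - y)) \<le> \<delta>)"

definition lin_comb_CQK :: "('a::real_normed_vector \<Rightarrow> 'b::real_normed_vector) \<Rightarrow> bool" where
  "lin_comb_CQK \<phi> \<longleftrightarrow> (\<exists>(a::real) (b::real) (c::real) C Q K.
      approx_orth_cauchy C \<and> approx_orth_quadratic Q \<and> approx_orth_constant K \<and>
      (\<forall>x. \<phi> x = a *\<^sub>R C x + b *\<^sub>R Q x + c *\<^sub>R K x))"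

end

theory Submission
  imports Defs
begin

text \<open>
  Since \<open>0\<close> is orthogonal to every vector, putting \<open>y = 0\<close> and \<open>x = 0\<close> determines \<open>h\<close> and
  \<open>k\<close> in terms of \<open>f\<close> and \<open>g\<close> up to bounded errors, leaving a defect in \<open>f, g\<close> alone that is
  bounded on orthogonal pairs. Such bounded expressions form a real vector space which is
  closed under the substitutions \<open>(x, y) \<mapsto> (y, x), (x, -y), (-x, -y)\<close>, as these preserve
  isosceles orthogonality. Suitable combinations of the defect show that \<open>x \<mapsto> f x - f (-x)\<close>
  is approximately Cauchy, \<open>x \<mapsto> f x + f (-x) + g x + g (-x)\<close> approximately quadratic and
  \<open>x \<mapsto> f x + f (-x) - g x - g (-x)\<close> approximately constant; \<open>f\<close> is the combination of
  these with coefficients \<open>1/2, 1/4, 1/4\<close>. Replacing \<open>y\<close> by \<open>-y\<close> exchanges \<open>f\<close> and \<open>g\<close>.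
\<close>

lemma iso_orth_commute: "iso_orth x y \<longleftrightarrow> iso_orth y x"
  unfolding iso_orth_def by (metis add.commute norm_minus_commute)

lemma iso_orth_minus_right: "iso_orth x (- y) \<longleftrightarrow> iso_orth x y"
  unfolding iso_orth_def by (simp add: eq_commute)

lemma iso_orth_minus: "iso_orth (- x) (- y) \<longleftrightarrow> iso_orth x y"
  unfolding iso_orth_def by (metis minus_add_distrib minus_diff_minus norm_minus_cancel)

lemma iso_orth_zero_right: "iso_orth x 0"
  and iso_orth_zero_left: "iso_orth 0 y"
  unfolding iso_orth_def by (simp_all add: norm_minus_commute)

definition orth_bounded :: "('a::real_normed_vector \<Rightarrow> 'a \<Rightarrow> 'b::real_normed_vector) \<Rightarrow> bool"
  where "orth_bounded D \<longleftrightarrow> (\<exists>\<delta>. \<forall>x y. iso_orth x y \<longrightarrow> norm (D x y) \<le> \<delta>)"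

lemma orth_bounded_iff_pos:
  "orth_bounded D \<longleftrightarrow> (\<exists>\<delta>>0. \<forall>x y. iso_orth x y \<longrightarrow> norm (D x y) \<le> \<delta>)"
  unfolding orth_bounded_def
  by (metis (no_types, opaque_lifting) max.strict_coboundedI2 max.coboundedI1 order.trans zero_less_one)

lemma approx_orth_cauchy_iff_orth_bounded:
  "approx_orth_cauchy \<phi> \<longleftrightarrow> orth_bounded (\<lambda>x y. \<phi> (x + y) - \<phi> x - \<phi> y)"
  by (simp add: approx_orth_cauchy_def orth_bounded_iff_pos)

lemma approx_orth_quadratic_iff_orth_bounded:
  "approx_orth_quadratic \<phi> \<longleftrightarrow>
    orth_bounded (\<lambda>x y. \<phi> (x + y) + \<phi> (x - y) - 2 *\<^sub>R \<phi> x - 2 *\<^sub>R \<phi> y)"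
  by (simp add: approx_orth_quadratic_def orth_bounded_iff_pos)

lemma approx_orth_constant_iff_orth_bounded:
  "approx_orth_constant \<phi> \<longleftrightarrow> orth_bounded (\<lambda>x y. \<phi> (x + y) - \<phi> (x - y))"
  by (simp add: approx_orth_constant_def orth_bounded_iff_pos)

lemma orth_bounded_const: "orth_bounded (\<lambda>x y. c)"
  unfolding orth_bounded_def by blast

lemma orth_bounded_add:
  assumes "orth_bounded D" and "orth_bounded E"
  shows "orth_bounded (\<lambda>x y. D x y + E x y)"
proof -
  obtain \<delta> \<eta> where "\<forall>x y. iso_orth x y \<longrightarrow> norm (D x y) \<le> \<delta>"
    and "\<forall>x y. iso_orth x y \<longrightarrow> norm (E x y) \<le> \<eta>"
    using assms unfolding orth_bounded_def by blast
  then have "\<forall>x y. iso_orth x y \<longrightarrow> norm (D x y + E x y) \<le> \<delta> + \<eta>"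
    by (auto intro!: norm_triangle_le add_mono)
  then show ?thesis
    unfolding orth_bounded_def by blast
qed

lemma orth_bounded_scaleR:
  assumes "orth_bounded D"
  shows "orth_bounded (\<lambda>x y. c *\<^sub>R D x y)"
proof -
  obtain \<delta> where "\<forall>x y. iso_orth x y \<longrightarrow> norm (D x y) \<le> \<delta>"
    using assms unfolding orth_bounded_def by blast
  then have "\<forall>x y. iso_orth x y \<longrightarrow> norm (c *\<^sub>R D x y) \<le> \<bar>c\<bar> * \<delta>"
    by (simp add: mult_left_mono)
  then show ?thesis
    unfolding orth_bounded_def by blast
qed

lemma orth_bounded_diff:
  assumes "orth_bounded D" and "orth_bounded E"
  shows "orth_bounded (\<lambda>x y. D x y - E x y)"
  using orth_bounded_add[OF assms(1) orth_bounded_scaleR[OF assms(2), of "-1"]] by simp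

lemma orth_bounded_scaleR_iff:
  assumes "c \<noteq> 0"
  shows "orth_bounded (\<lambda>x y. c *\<^sub>R D x y) \<longleftrightarrow> orth_bounded D"
  using orth_bounded_scaleR[of "\<lambda>x y. c *\<^sub>R D x y" "inverse c"] orth_bounded_scaleR[of D c] assms
  by auto

lemma orth_bounded_compose:
  assumes "orth_bounded D" and "\<And>x y. iso_orth x y \<Longrightarrow> iso_orth (u x y) (v x y)"
  shows "orth_bounded (\<lambda>x y. D (u x y) (v x y))"
  using assms unfolding orth_bounded_def by blast

lemma orth_bounded_swap: "orth_bounded D \<Longrightarrow> orth_bounded (\<lambda>x y. D y x)"
  by (erule orth_bounded_compose) (simp add: iso_orth_commute)

lemma orth_bounded_minus_right: "orth_bounded D \<Longrightarrow> orth_bounded (\<lambda>x y. D x (- y))"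
  by (erule orth_bounded_compose) (simp add: iso_orth_minus_right)

lemma orth_bounded_minus: "orth_bounded D \<Longrightarrow> orth_bounded (\<lambda>x y. D (- x) (- y))"
  by (erule orth_bounded_compose) (simp add: iso_orth_minus)

lemma orth_bounded_zero_right: "orth_bounded D \<Longrightarrow> orth_bounded (\<lambda>x y. D x 0)"
  by (erule orth_bounded_compose) (rule iso_orth_zero_right)

lemma orth_bounded_zero_left: "orth_bounded D \<Longrightarrow> orth_bounded (\<lambda>x y. D 0 y)"
  by (erule orth_bounded_compose) (rule iso_orth_zero_left)

definition pexider_defect ::
    "('a::real_normed_vector \<Rightarrow> 'b::real_normed_vector) \<Rightarrow> ('a \<Rightarrow> 'b) \<Rightarrow> ('a \<Rightarrow> 'b) \<Rightarrow> ('a \<Rightarrow> 'b) \<Rightarrow>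
      'a \<Rightarrow> 'a \<Rightarrow> 'b"
  where "pexider_defect f g h k x y = f (x + y) + g (x - y) - h x - k y"

text \<open>The values of \<open>h\<close> and \<open>k\<close> forced by \<open>y = 0\<close> and \<open>x = 0\<close>.\<close>

definition reduced_defect ::
    "('a::real_normed_vector \<Rightarrow> 'b::real_normed_vector) \<Rightarrow> ('a \<Rightarrow> 'b) \<Rightarrow> 'a \<Rightarrow> 'a \<Rightarrow> 'b"
  where "reduced_defect f g = pexider_defect f g (\<lambda>x. f x + g x) (\<lambda>y. f y + g (- y))"

lemma orth_bounded_reduced_defect:
  assumes "orth_bounded (pexider_defect f g h k)"
  shows "orth_bounded (reduced_defect f g)"
proof -
  let ?P = "pexider_defect f g h k"
  have "orth_bounded (\<lambda>x y. ?P x y - ?P x 0 - ?P 0 y - (h 0 + k 0))"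
    by (intro orth_bounded_diff assms orth_bounded_zero_right[OF assms]
        orth_bounded_zero_left[OF assms] orth_bounded_const)
  moreover have "?P x y - ?P x 0 - ?P 0 y - (h 0 + k 0) = reduced_defect f g x y" for x y
    by (simp add: reduced_defect_def pexider_defect_def algebra_simps)
  ultimately show ?thesis
    by simp
qed

lemma reduced_defect_swap: "reduced_defect g f = (\<lambda>x y. reduced_defect f g x (- y))"
  by (simp add: fun_eq_iff reduced_defect_def pexider_defect_def algebra_simps)

lemma approx_orth_cauchy_odd_part:
  assumes R: "orth_bounded (reduced_defect f g)"
  shows "approx_orth_cauchy (\<lambda>x. f x - f (- x))"
proof -
  define Od where "Od x y = reduced_defect f g x y - reduced_defect f g (- x) (- y)" for x y
  have "orth_bounded Od"
    unfolding Od_def by (rule orth_bounded_diff[OF R orth_bounded_minus[OF R]])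
  then have "orth_bounded (\<lambda>x y. Od x y + Od y x)"
    by (intro orth_bounded_add orth_bounded_swap[of Od])
  moreover
  let ?C = "\<lambda>x. f x - f (- x)"
  have "Od x y + Od y x = 2 *\<^sub>R (?C (x + y) - ?C x - ?C y)" for x y
    by (simp add: Od_def reduced_defect_def pexider_defect_def algebra_simps scaleR_2)
  ultimately show ?thesis
    by (simp add: approx_orth_cauchy_iff_orth_bounded orth_bounded_scaleR_iff)
qed

lemma orth_bounded_even_combination:
  assumes R: "orth_bounded (reduced_defect f g)"
  shows "orth_bounded (\<lambda>x y. reduced_defect f g x y + reduced_defect f g (- x) (- y))"
  by (rule orth_bounded_add[OF R orth_bounded_minus[OF R]])

lemma approx_orth_quadratic_even_sum:
  assumes "orth_bounded (reduced_defect f g)"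
  shows "approx_orth_quadratic (\<lambda>x. f x + f (- x) + g x + g (- x))"
proof -
  define Ev where "Ev x y = reduced_defect f g x y + reduced_defect f g (- x) (- y)" for x y
  have "orth_bounded Ev"
    unfolding Ev_def using assms by (rule orth_bounded_even_combination)
  then have "orth_bounded (\<lambda>x y. Ev x y + Ev x (- y))"
    by (intro orth_bounded_add orth_bounded_minus_right[of Ev])
  moreover
  let ?A = "\<lambda>x. f x + f (- x) + g x + g (- x)"
  have "Ev x y + Ev x (- y) = ?A (x + y) + ?A (x - y) - 2 *\<^sub>R ?A x - 2 *\<^sub>R ?A y" for x y
    by (simp add: Ev_def reduced_defect_def pexider_defect_def algebra_simps scaleR_2)
  ultimately show ?thesis
    by (simp add: approx_orth_quadratic_iff_orth_bounded)
qed

lemma approx_orth_constant_even_difference: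
  assumes "orth_bounded (reduced_defect f g)"
  shows "approx_orth_constant (\<lambda>x. f x + f (- x) - g x - g (- x))"
proof -
  define Ev where "Ev x y = reduced_defect f g x y + reduced_defect f g (- x) (- y)" for x y
  have "orth_bounded Ev"
    unfolding Ev_def using assms by (rule orth_bounded_even_combination)
  then have "orth_bounded (\<lambda>x y. Ev x y - Ev x (- y))"
    by (intro orth_bounded_diff orth_bounded_minus_right[of Ev])
  moreover
  let ?B = "\<lambda>x. f x + f (- x) - g x - g (- x)"
  have "(\<lambda>x y. Ev x y - Ev x (- y)) = (\<lambda>x y. ?B (x + y) - ?B (x - y))"
    by (simp add: fun_eq_iff Ev_def reduced_defect_def pexider_defect_def algebra_simps)
  ultimately show ?thesis
    by (simp only: approx_orth_constant_iff_orth_bounded)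
qed

lemma lin_comb_CQK_of_reduced_defect:
  assumes "orth_bounded (reduced_defect f g)"
  shows "lin_comb_CQK f"
  unfolding lin_comb_CQK_def
proof (intro exI conjI)
  show "approx_orth_cauchy (\<lambda>x. f x - f (- x))"
    using assms by (rule approx_orth_cauchy_odd_part)
  show "approx_orth_quadratic (\<lambda>x. f x + f (- x) + g x + g (- x))"
    using assms by (rule approx_orth_quadratic_even_sum)
  show "approx_orth_constant (\<lambda>x. f x + f (- x) - g x - g (- x))"
    using assms by (rule approx_orth_constant_even_difference)
  show "\<forall>x. f x = (1/2) *\<^sub>R (f x - f (- x)) + (1/4) *\<^sub>R (f x + f (- x) + g x + g (- x))
      + (1/4) *\<^sub>R (f x + f (- x) - g x - g (- x))"
    by (simp add: algebra_simps flip: scaleR_add_left)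
qed

theorem theorem3p1:
  fixes f g h k :: "'a::real_normed_vector \<Rightarrow> 'b::banach"
    and \<epsilon> :: real
  assumes "f 0 = 0" and "g 0 = 0" and "h 0 = 0" and "k 0 = 0"
    and "\<epsilon> > 0"
    and "\<forall>x y. iso_orth x y \<longrightarrow> norm (f (x + y) + g (x - y) - h x - k y) \<le> \<epsilon>"
  shows "lin_comb_CQK f \<and> lin_comb_CQK g"
proof -
  have "orth_bounded (pexider_defect f g h k)"
    using assms(6) unfolding orth_bounded_def pexider_defect_def by blast
  then have R: "orth_bounded (reduced_defect f g)"
    by (rule orth_bounded_reduced_defect)
  then have "orth_bounded (reduced_defect g f)"
    by (subst reduced_defect_swap) (rule orth_bounded_minus_right)
  then show ?thesis
    using R by (simp add: lin_comb_CQK_of_reduced_defect)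
qed

end
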